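(* If $D$ is a weakly locally finite division ring, then the center $Z(D')$ of the derived subgroup $D'=[D^*,D^*]$ of $D^*$ is a torsion group.
   Context: A division ring is weakly locally finite if the division subring generated by any finite subset is finite dimensional over its own center. *)

theory Defs
  imports Main
begin

text \<open>Division rings are modelled by the type class division_ring; the ring D is the
whole type.\<close>

definition division_subring :: "'a::division_ring set \<Rightarrow> bool" where
  "division_subring K \<longleftrightarrow> 0 \<in> K \<and> 1 \<in> K \<and>
     (\<forall>x\<in>K. \<forall>y\<in>K. x + y \<in> K \<and> x * y \<in> K) \<and>
     (\<forall>x\<in>K. - x \<in> K) \<and>
     (\<forall>x\<in>K. x \<noteq> 0 \<longrightarrow> inverse x \<in> K)"

definition gen_division_subring :: "'a::division_ring set \<Rightarrow> 'a set" where
  "gen_division_subring S = \<Inter>{K. division_subring K \<and> S \<subseteq> K}"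

definition center_of :: "'a::division_ring set \<Rightarrow> 'a set" where
  "center_of K = {z \<in> K. \<forall>x\<in>K. z * x = x * z}"

definition fin_dim_over_center :: "'a::division_ring set \<Rightarrow> bool" where
  "fin_dim_over_center K \<longleftrightarrow>
     (\<exists>B. finite B \<and> B \<subseteq> K \<and>
        (\<forall>x\<in>K. \<exists>c. (\<forall>b\<in>B. c b \<in> center_of K) \<and> x = (\<Sum>b\<in>B. c b * b)))"

definition weakly_locally_finite :: "'a::division_ring itself \<Rightarrow> bool" where
  "weakly_locally_finite TYPE('a) \<longleftrightarrow>
     (\<forall>S::'a set. finite S \<longrightarrow> fin_dim_over_center (gen_division_subring S))"

definition mult_subgroup :: "'a::division_ring set \<Rightarrow> bool" where
  "mult_subgroup H \<longleftrightarrow> H \<subseteq> - {0} \<and> 1 \<in> H \<and>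
     (\<forall>x\<in>H. \<forall>y\<in>H. x * y \<in> H) \<and> (\<forall>x\<in>H. inverse x \<in> H)"

definition derived_subgroup :: "'a::division_ring set" where
  "derived_subgroup = \<Inter>{H. mult_subgroup H \<and>
     (\<forall>x y. x \<noteq> 0 \<longrightarrow> y \<noteq> 0 \<longrightarrow> x * y * inverse x * inverse y \<in> H)}"

end

theory Submission
  imports Defs "Jordan_Normal_Form.Determinant"
begin

text \<open>An element z of Z(D') commutes with each of its conjugates x z x^-1, since
  x z x^-1 z^-1 lies in D'; a Hua-type identity then shows that z is central in D.
  As a finite product of commutators, z lies in the derived group of the division subring K
  generated by finitely many elements, and K has a basis b_1, ..., b_n over F = Z(K).
  Taking determinants of the F-linear maps v \<mapsto> a v of K gives a multiplicative map
  K^* \<rightarrow> F^* that is trivial on commutators and sends the central element z to z^n,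
  so z^n = 1.\<close>

lemma division_subring_UNIV: "division_subring (UNIV :: 'a::division_ring set)"
  by (simp add: division_subring_def)

lemma division_subring_gen_division_subring: "division_subring (gen_division_subring S)"
  unfolding gen_division_subring_def division_subring_def by blast

lemma subset_gen_division_subring: "S \<subseteq> gen_division_subring S"
  unfolding gen_division_subring_def by blast

lemma gen_division_subring_mono: "S \<subseteq> T \<Longrightarrow> gen_division_subring S \<subseteq> gen_division_subring T"
  unfolding gen_division_subring_def by blast

lemma center_of_subset: "center_of K \<subseteq> K"
  by (auto simp: center_of_def)

lemma center_of_commute: "z \<in> center_of K \<Longrightarrow> x \<in> K \<Longrightarrow> z * x = x * z"
  by (auto simp: center_of_def)

lemma center_ofI: "z \<in> K \<Longrightarrow> (\<And>x. x \<in> K \<Longrightarrow> z * x = x * z) \<Longrightarrow> z \<in> center_of K"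
  by (auto simp: center_of_def)

lemma center_of_commute_center: "x \<in> center_of K \<Longrightarrow> y \<in> center_of K \<Longrightarrow> x * y = y * x"
  using center_of_commute center_of_subset by blast

context
  fixes K :: "'a::division_ring set"
  assumes K: "division_subring K"
begin

lemma division_subring_zero: "0 \<in> K"
  using K by (simp add: division_subring_def)

lemma division_subring_add: "x \<in> K \<Longrightarrow> y \<in> K \<Longrightarrow> x + y \<in> K"
  using K by (simp add: division_subring_def)

lemma division_subring_mult: "x \<in> K \<Longrightarrow> y \<in> K \<Longrightarrow> x * y \<in> K"
  using K by (simp add: division_subring_def)

lemma division_subring_inverse: "x \<in> K \<Longrightarrow> inverse x \<in> K"
  using K unfolding division_subring_def by (metis inverse_zero)

lemma division_subring_sum: "(\<And>i. i \<in> A \<Longrightarrow> f i \<in> K) \<Longrightarrow> sum f A \<in> K"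
  by (induction A rule: infinite_finite_induct)
    (auto intro: division_subring_zero division_subring_add)

lemma center_of_zero: "0 \<in> center_of K"
  using K by (auto simp: center_of_def division_subring_def)

lemma center_of_one: "1 \<in> center_of K"
  using K by (auto simp: center_of_def division_subring_def)

lemma center_of_add: "x \<in> center_of K \<Longrightarrow> y \<in> center_of K \<Longrightarrow> x + y \<in> center_of K"
  using K by (auto simp: center_of_def division_subring_def distrib_left distrib_right)

lemma center_of_uminus: "x \<in> center_of K \<Longrightarrow> - x \<in> center_of K"
  using K by (simp add: center_of_def division_subring_def)

lemma center_of_diff: "x \<in> center_of K \<Longrightarrow> y \<in> center_of K \<Longrightarrow> x - y \<in> center_of K"
  using center_of_add[of x "- y"] center_of_uminus[of y] by simp

lemma center_of_mult:
  assumes x: "x \<in> center_of K" and y: "y \<in> center_of K"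
  shows "x * y \<in> center_of K"
proof (rule center_ofI)
  show "x * y \<in> K"
    using x y center_of_subset by (blast intro: division_subring_mult)
  fix w assume w: "w \<in> K"
  have "x * y * w = x * (w * y)"
    by (simp add: mult.assoc center_of_commute[OF y w])
  also have "\<dots> = w * x * y"
    by (simp add: mult.assoc[symmetric] center_of_commute[OF x w])
  finally show "x * y * w = w * (x * y)"
    by (simp add: mult.assoc)
qed

lemma center_of_inverse:
  assumes x: "x \<in> center_of K"
  shows "inverse x \<in> center_of K"
proof (rule center_ofI)
  show "inverse x \<in> K"
    using x center_of_subset by (blast intro: division_subring_inverse)
  fix w assume "w \<in> K"
  then show "inverse x * w = w * inverse x"
    using center_of_commute[OF x] by (metis mult_commute_imp_mult_inverse_commute)
qed

lemma center_of_sum: "(\<And>i. i \<in> A \<Longrightarrow> f i \<in> center_of K) \<Longrightarrow> sum f A \<in> center_of K"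
  by (induction A rule: infinite_finite_induct) (auto intro: center_of_zero center_of_add)

end

definition commutator :: "'a::division_ring \<Rightarrow> 'a \<Rightarrow> 'a" where
  "commutator x y = x * y * inverse x * inverse y"

inductive_set commutator_products :: "'a::division_ring set \<Rightarrow> 'a set" for K where
  one: "1 \<in> commutator_products K"
| commutator_mult: "x \<in> K \<Longrightarrow> y \<in> K \<Longrightarrow> x \<noteq> 0 \<Longrightarrow> y \<noteq> 0 \<Longrightarrow> p \<in> commutator_products K \<Longrightarrow>
    commutator x y * p \<in> commutator_products K"

lemma commutator_nonzero: "x \<noteq> 0 \<Longrightarrow> y \<noteq> 0 \<Longrightarrow> commutator x y \<noteq> 0"
  by (simp add: commutator_def)

lemma inverse_commutator: "x \<noteq> 0 \<Longrightarrow> y \<noteq> 0 \<Longrightarrow> inverse (commutator x y) = commutator y x"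
  by (simp add: commutator_def nonzero_inverse_mult_distrib mult.assoc)

lemma commutator_in_commutator_products:
  "x \<in> K \<Longrightarrow> y \<in> K \<Longrightarrow> x \<noteq> 0 \<Longrightarrow> y \<noteq> 0 \<Longrightarrow> commutator x y \<in> commutator_products K"
  using commutator_products.commutator_mult[OF _ _ _ _ commutator_products.one] by fastforce

lemma commutator_products_nonzero: "p \<in> commutator_products K \<Longrightarrow> p \<noteq> 0"
  by (induction rule: commutator_products.induct) (auto simp: commutator_nonzero)

lemma commutator_products_mult:
  "p \<in> commutator_products K \<Longrightarrow> q \<in> commutator_products K \<Longrightarrow> p * q \<in> commutator_products K"
  by (induction rule: commutator_products.induct)
    (auto simp: mult.assoc intro: commutator_products.commutator_mult)

lemma commutator_products_inverse:
  "p \<in> commutator_products K \<Longrightarrow> inverse p \<in> commutator_products K"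
proof (induction rule: commutator_products.induct)
  case one
  then show ?case by (simp add: commutator_products.one)
next
  case (commutator_mult x y p)
  then have "inverse (commutator x y * p) = inverse p * commutator y x"
    by (simp add: nonzero_inverse_mult_distrib commutator_nonzero commutator_products_nonzero
        inverse_commutator)
  with commutator_mult show ?case
    by (simp add: commutator_products_mult commutator_in_commutator_products)
qed

lemma commutator_products_mono:
  "p \<in> commutator_products K \<Longrightarrow> K \<subseteq> L \<Longrightarrow> p \<in> commutator_products L"
  by (induction rule: commutator_products.induct)
    (auto intro: commutator_products.intros)

lemma commutator_products_subset:
  assumes "division_subring K"
  shows "commutator_products K \<subseteq> K"
proof
  fix p assume "p \<in> commutator_products K"
  then show "p \<in> K"
    using assms by induction (auto simp: commutator_def division_subring_def)
qed

lemma commutator_products_finite_support: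
  assumes "p \<in> commutator_products (UNIV :: 'a::division_ring set)"
  obtains S where "finite S" "p \<in> commutator_products (gen_division_subring S)"
proof -
  from assms have "\<exists>S. finite S \<and> p \<in> commutator_products (gen_division_subring S)"
  proof (induction rule: commutator_products.induct)
    case one
    show ?case
      by (intro exI[of _ "{}"]) (simp add: commutator_products.one)
  next
    case (commutator_mult x y p)
    then obtain S where S: "finite S" "p \<in> commutator_products (gen_division_subring S)"
      by blast
    let ?T = "insert x (insert y S)"
    have "gen_division_subring S \<subseteq> gen_division_subring ?T"
      by (rule gen_division_subring_mono) blast
    with S(2) have "p \<in> commutator_products (gen_division_subring ?T)"
      by (rule commutator_products_mono)
    moreover have "x \<in> gen_division_subring ?T" "y \<in> gen_division_subring ?T"
      using subset_gen_division_subring[of ?T] by auto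
    ultimately have "commutator x y * p \<in> commutator_products (gen_division_subring ?T)"
      using commutator_mult.hyps(3,4) by (intro commutator_products.commutator_mult)
    then show ?case
      using S(1) by (intro exI[of _ ?T]) simp
  qed
  with that show ?thesis by blast
qed

lemma mult_subgroup_commutator_products:
  "mult_subgroup (commutator_products (UNIV :: 'a::division_ring set))"
  unfolding mult_subgroup_def
  using commutator_products_nonzero commutator_products.one commutator_products_mult
    commutator_products_inverse by blast

lemma derived_subgroup_subset_commutator_products:
  "(derived_subgroup :: 'a::division_ring set) \<subseteq> commutator_products UNIV"
  unfolding derived_subgroup_def
  by (rule Inter_lower)
    (auto simp: mult_subgroup_commutator_products
      commutator_in_commutator_products[unfolded commutator_def])

lemma commutator_in_derived_subgroup:
  "x \<noteq> 0 \<Longrightarrow> y \<noteq> 0 \<Longrightarrow> commutator x y \<in> (derived_subgroup :: 'a::division_ring set)"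
  unfolding derived_subgroup_def commutator_def by blast

section \<open>The centre of the derived group is central\<close>

lemma central_if_commutes_with_conjugates:
  fixes z :: "'a::division_ring"
  assumes conj: "\<And>x. x \<noteq> 0 \<Longrightarrow> z * (x * z * inverse x) = (x * z * inverse x) * z"
  shows "z * y = y * z"
proof (cases "y = 0 \<or> y + 1 = 0")
  case True
  then have "y = 0 \<or> y = - 1" by (auto simp: eq_neg_iff_add_eq_0)
  then show ?thesis by auto
next
  case False
  then have y: "y \<noteq> 0" and y1: "y + 1 \<noteq> 0" by auto
  define b where "b = y * z * inverse y"
  define c where "c = (y + 1) * z * inverse (y + 1)"
  have zb: "z * b = b * z" and zc: "z * c = c * z"
    unfolding b_def c_def using conj y y1 by auto
  have b_y: "b * y = y * z" and c_y: "c * (y + 1) = (y + 1) * z"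
    unfolding b_def c_def using y y1 by (simp_all add: mult.assoc)
  \<comment> \<open>subtracting b y = y z from c (y + 1) = y z + z expresses y through b, c and z,
    all of which commute with z\<close>
  have key: "(c - b) * y = z - c"
    using b_y c_y by (simp add: algebra_simps)
  show ?thesis
  proof (cases "c = b")
    case True
    with key c_y have "(y + 1) * z = z * (y + 1)" by simp
    then show ?thesis by (simp add: algebra_simps)
  next
    case False
    then have "inverse (c - b) * ((c - b) * y) = y"
      by (simp add: mult.assoc[symmetric])
    with key have y_eq: "y = inverse (c - b) * (z - c)"
      by simp
    have "z * (c - b) = (c - b) * z" and zzc: "z * (z - c) = (z - c) * z"
      using zb zc by (simp_all add: algebra_simps)
    then have zi: "z * inverse (c - b) = inverse (c - b) * z"
      by (metis mult_commute_imp_mult_inverse_commute)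
    have "z * y = inverse (c - b) * z * (z - c)"
      unfolding y_eq using zi by (simp add: mult.assoc[symmetric])
    also have "\<dots> = y * z"
      unfolding y_eq using zzc by (simp add: mult.assoc)
    finally show ?thesis .
  qed
qed

lemma center_derived_subgroup_commutes_with_conjugates:
  fixes z x :: "'a::division_ring"
  assumes z: "z \<in> center_of derived_subgroup" and x: "x \<noteq> 0"
  shows "z * (x * z * inverse x) = (x * z * inverse x) * z"
proof -
  have z0: "z \<noteq> 0"
    using z center_of_subset derived_subgroup_subset_commutator_products
      commutator_products_nonzero by blast
  define b where "b = x * z * inverse x"
  have "commutator x z = b * inverse z"
    by (simp add: commutator_def b_def)
  then have comm: "z * (b * inverse z) = b * inverse z * z"
    using z commutator_in_derived_subgroup[OF x z0] by (metis center_of_commute)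
  have "z * b = z * (b * inverse z) * z"
    using z0 by (simp add: mult.assoc)
  also have "\<dots> = b * z"
    using z0 by (simp add: comm mult.assoc)
  finally show ?thesis
    by (simp add: b_def)
qed

lemma center_derived_subgroup_central:
  "z \<in> center_of (derived_subgroup :: 'a::division_ring set) \<Longrightarrow> z * x = x * z"
  by (rule central_if_commutes_with_conjugates)
    (rule center_derived_subgroup_commutes_with_conjugates)

section \<open>Bases over the centre\<close>

definition spans_over_center :: "'a::division_ring set \<Rightarrow> 'a set \<Rightarrow> bool" where
  "spans_over_center K B \<longleftrightarrow> finite B \<and> B \<subseteq> K \<and>
     (\<forall>x\<in>K. \<exists>c. (\<forall>b\<in>B. c b \<in> center_of K) \<and> x = (\<Sum>b\<in>B. c b * b))"

definition independent_over_center :: "'a::division_ring set \<Rightarrow> 'a set \<Rightarrow> bool" where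
  "independent_over_center K B \<longleftrightarrow>
     (\<forall>c. (\<forall>b\<in>B. c b \<in> center_of K) \<longrightarrow> (\<Sum>b\<in>B. c b * b) = 0 \<longrightarrow> (\<forall>b\<in>B. c b = 0))"

lemma spans_over_center_remove:
  assumes K: "division_subring K" and B: "spans_over_center K B"
    and c: "\<forall>b\<in>B. c b \<in> center_of K" "(\<Sum>b\<in>B. c b * b) = 0"
    and b0: "b0 \<in> B" "c b0 \<noteq> 0"
  shows "spans_over_center K (B - {b0})"
  unfolding spans_over_center_def
proof (intro conjI ballI)
  let ?B' = "B - {b0}"
  show "finite ?B'" "?B' \<subseteq> K"
    using B by (auto simp: spans_over_center_def)
  have split: "(\<Sum>b\<in>B. g b) = g b0 + (\<Sum>b\<in>?B'. g b)" for g :: "'a \<Rightarrow> 'a"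
    using B b0(1) by (simp add: spans_over_center_def sum.remove)
  define r where "r b = inverse (c b0) * c b" for b
  have r: "r b \<in> center_of K" if "b \<in> B" for b
    unfolding r_def using c(1) b0(1) that by (intro center_of_mult center_of_inverse K) auto
  have b0_eq: "b0 = - (\<Sum>b\<in>?B'. r b * b)"
  proof -
    have "c b0 * b0 = - (\<Sum>b\<in>?B'. c b * b)"
      using c(2) split[of "\<lambda>b. c b * b"] by (simp add: eq_neg_iff_add_eq_0)
    then have "inverse (c b0) * (c b0 * b0) = - (\<Sum>b\<in>?B'. inverse (c b0) * (c b * b))"
      by (simp add: sum_distrib_left)
    with b0(2) show ?thesis
      by (simp add: r_def mult.assoc[symmetric])
  qed
  fix x assume "x \<in> K"
  then obtain d where d: "\<forall>b\<in>B. d b \<in> center_of K" "x = (\<Sum>b\<in>B. d b * b)"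
    using B by (auto simp: spans_over_center_def)
  have "x = d b0 * b0 + (\<Sum>b\<in>?B'. d b * b)"
    using d(2) split[of "\<lambda>b. d b * b"] by simp
  also have "d b0 * b0 = d b0 * - (\<Sum>b\<in>?B'. r b * b)"
    using b0_eq by (rule arg_cong)
  finally have "x = (\<Sum>b\<in>?B'. (d b - d b0 * r b) * b)"
    by (simp add: sum_distrib_left sum_subtractf left_diff_distrib mult.assoc)
  moreover have "\<forall>b\<in>?B'. d b - d b0 * r b \<in> center_of K"
    using d(1) r b0(1) by (auto intro!: center_of_diff[OF K] center_of_mult[OF K])
  ultimately show "\<exists>c. (\<forall>b\<in>?B'. c b \<in> center_of K) \<and> x = (\<Sum>b\<in>?B'. c b * b)"
    by (intro exI[of _ "\<lambda>b. d b - d b0 * r b"]) simp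
qed

text \<open>A spanning set of minimal cardinality is a basis.\<close>

lemma fin_dim_over_center_obtains_basis:
  assumes K: "division_subring K" and "fin_dim_over_center K"
  obtains B where "spans_over_center K B" "independent_over_center K B"
proof -
  obtain B0 where "spans_over_center K B0"
    using assms(2) unfolding fin_dim_over_center_def spans_over_center_def by blast
  then obtain B where B: "spans_over_center K B"
    and min: "\<And>B'. spans_over_center K B' \<Longrightarrow> card B \<le> card B'"
    using ex_has_least_nat[of "spans_over_center K" B0 card] by blast
  have "independent_over_center K B"
    unfolding independent_over_center_def
  proof (intro allI impI ballI, rule ccontr)
    fix c b0
    assume c: "\<forall>b\<in>B. c b \<in> center_of K" "(\<Sum>b\<in>B. c b * b) = 0"
      and b0: "b0 \<in> B" "c b0 \<noteq> 0"
    have "card B \<le> card (B - {b0})"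
      by (rule min, rule spans_over_center_remove[OF K B c b0])
    moreover have "finite B"
      using B by (simp add: spans_over_center_def)
    ultimately show False
      using b0(1) card_Diff1_less by fastforce
  qed
  with B that show ?thesis by blast
qed

section \<open>A commutative ring containing every centre\<close>

text \<open>The centre F = Z(K) is a set, not a type, so determinants over F are computed in the
  commutative ring \<Prod> Z(L), L ranging over all division subrings; its component at K is
  a ring homomorphism onto F.\<close>

definition centers_carrier :: "('a::division_ring set \<Rightarrow> 'a) set" where
  "centers_carrier = {f. \<forall>L. if division_subring L then f L \<in> center_of L else f L = 0}"

typedef (overloaded) 'a centers = "centers_carrier :: ('a::division_ring set \<Rightarrow> 'a) set"
  morphisms component Abs_centers
  by (rule exI[of _ "\<lambda>L. 0"]) (auto simp: center_of_zero centers_carrier_def)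

lemma in_centers_carrierI:
  "(\<And>L. division_subring L \<Longrightarrow> f L \<in> center_of L) \<Longrightarrow> (\<And>L. \<not> division_subring L \<Longrightarrow> f L = 0)
    \<Longrightarrow> f \<in> centers_carrier"
  by (auto simp: centers_carrier_def)

lemma component_in_center: "division_subring L \<Longrightarrow> component a L \<in> center_of L"
  using component[of a] by (auto simp: centers_carrier_def dest: spec[of _ L])

lemma component_nonsubring: "\<not> division_subring L \<Longrightarrow> component a L = 0"
  using component[of a] by (auto simp: centers_carrier_def dest: spec[of _ L])

lemma centers_eqI: "(\<And>L. division_subring L \<Longrightarrow> component a L = component b L) \<Longrightarrow> a = b"
  by (metis component_inject ext component_nonsubring)

instantiation centers :: (division_ring) comm_ring_1
begin

definition "0 = Abs_centers (\<lambda>L. 0)"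
definition "1 = Abs_centers (\<lambda>L. if division_subring L then 1 else 0)"
definition "a + b = Abs_centers (\<lambda>L. component a L + component b L)"
definition "a - b = Abs_centers (\<lambda>L. component a L - component b L)"
definition "- a = Abs_centers (\<lambda>L. - component a L)"
definition "a * b = Abs_centers (\<lambda>L. component a L * component b L)"

lemma component_zero: "component (0 :: 'a centers) L = 0"
  unfolding zero_centers_def
  by (subst Abs_centers_inverse) (auto intro!: in_centers_carrierI center_of_zero)

lemma component_one: "component (1 :: 'a centers) L = (if division_subring L then 1 else 0)"
  unfolding one_centers_def
  by (subst Abs_centers_inverse) (auto intro!: in_centers_carrierI center_of_one)

lemma component_add: "component (a + b) L = component a L + component b L"
  unfolding plus_centers_def
  by (subst Abs_centers_inverse)
    (auto intro!: in_centers_carrierI center_of_add component_in_center simp: component_nonsubring)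

lemma component_diff: "component (a - b) L = component a L - component b L"
  unfolding minus_centers_def
  by (subst Abs_centers_inverse)
    (auto intro!: in_centers_carrierI center_of_diff component_in_center simp: component_nonsubring)

lemma component_uminus: "component (- a) L = - component a L"
  unfolding uminus_centers_def
  by (subst Abs_centers_inverse)
    (auto intro!: in_centers_carrierI center_of_uminus component_in_center
      simp: component_nonsubring)

lemma component_mult: "component (a * b) L = component a L * component b L"
  unfolding times_centers_def
  by (subst Abs_centers_inverse)
    (auto intro!: in_centers_carrierI center_of_mult component_in_center simp: component_nonsubring)

instance
proof
  fix a b c :: "'a centers"
  show "a * b * c = a * (b * c)"
    by (rule centers_eqI) (simp add: component_mult mult.assoc)
  show "a * b = b * a"
    by (rule centers_eqI)
      (simp add: component_mult center_of_commute_center[OF component_in_center component_in_center])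
  show "1 * a = a"
    by (rule centers_eqI) (simp add: component_mult component_one)
  show "a + b + c = a + (b + c)"
    by (rule centers_eqI) (simp add: component_add add.assoc)
  show "a + b = b + a"
    by (rule centers_eqI) (simp add: component_add add.commute)
  show "0 + a = a"
    by (rule centers_eqI) (simp add: component_add component_zero)
  show "- a + a = 0"
    by (rule centers_eqI) (simp add: component_add component_zero component_uminus)
  show "a - b = a + - b"
    by (rule centers_eqI) (simp add: component_add component_diff component_uminus)
  show "(a + b) * c = a * c + b * c"
    by (rule centers_eqI) (simp add: component_add component_mult distrib_right)
  have "component (0 :: 'a centers) UNIV \<noteq> component 1 UNIV"
    by (simp add: component_zero component_one division_subring_UNIV)
  then show "(0 :: 'a centers) \<noteq> 1" by metis
qed

end

lemma component_sum: "component (sum f A) L = (\<Sum>x\<in>A. component (f x) L)"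
  by (induction A rule: infinite_finite_induct) (auto simp: component_zero component_add)

lemma component_power: "division_subring L \<Longrightarrow> component (x ^ n) L = component x L ^ n"
  by (induction n) (auto simp: component_one component_mult)

definition lift_at :: "'a::division_ring set \<Rightarrow> 'a \<Rightarrow> 'a \<Rightarrow> 'a centers" where
  "lift_at K v d = Abs_centers (\<lambda>L. if L = K then v else if division_subring L then d else 0)"

lemma component_lift_at:
  assumes K: "division_subring K" and v: "v \<in> center_of K" and d: "d = 0 \<or> d = 1"
  shows "component (lift_at K v d) L = (if L = K then v else if division_subring L then d else 0)"
proof -
  have "(\<lambda>L. if L = K then v else if division_subring L then d else 0) \<in> centers_carrier"
    using K v d by (intro in_centers_carrierI) (auto intro: center_of_zero center_of_one)
  then show ?thesis
    unfolding lift_at_def by (simp add: Abs_centers_inverse)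
qed

lemma lift_at_zero: "division_subring K \<Longrightarrow> lift_at K 0 0 = 0"
  by (rule centers_eqI) (simp add: component_lift_at center_of_zero component_zero)

lemma lift_at_one: "division_subring K \<Longrightarrow> lift_at K 1 1 = 1"
  by (rule centers_eqI) (simp add: component_lift_at center_of_one component_one)

section \<open>Determinants of left multiplications\<close>

locale center_basis =
  fixes K :: "'a::division_ring set" and bs :: "'a list"
  assumes division_subring: "division_subring K"
    and distinct_bs: "distinct bs"
    and spans: "spans_over_center K (set bs)"
    and independent: "independent_over_center K (set bs)"
begin

abbreviation "n \<equiv> length bs"

lemma set_bs_subset: "set bs \<subseteq> K"
  using spans by (simp add: spans_over_center_def)

lemma nth_bs_in: "j < n \<Longrightarrow> bs ! j \<in> K"
  using set_bs_subset by auto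

lemma sum_set_bs: "(\<Sum>b\<in>set bs. g b) = (\<Sum>j = 0..<n. g (bs ! j))"
  by (simp add: sum.distinct_set_conv_list[OF distinct_bs] sum_list_sum_nth)

lemma length_bs_pos: "n > 0"
proof (rule ccontr)
  assume "\<not> n > 0"
  then have "set bs = {}" by simp
  moreover have "(1 :: 'a) \<in> K"
    using division_subring by (simp add: division_subring_def)
  ultimately show False
    using spans by (auto simp: spans_over_center_def)
qed

definition coord :: "'a \<Rightarrow> 'a \<Rightarrow> 'a" where
  "coord x = (SOME c. (\<forall>b\<in>set bs. c b \<in> center_of K) \<and> x = (\<Sum>b\<in>set bs. c b * b))"

lemma coord:
  assumes "x \<in> K"
  shows "\<forall>b\<in>set bs. coord x b \<in> center_of K" "x = (\<Sum>b\<in>set bs. coord x b * b)"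
proof -
  have "\<exists>c. (\<forall>b\<in>set bs. c b \<in> center_of K) \<and> x = (\<Sum>b\<in>set bs. c b * b)"
    using spans assms by (simp add: spans_over_center_def)
  then have "(\<forall>b\<in>set bs. coord x b \<in> center_of K) \<and> x = (\<Sum>b\<in>set bs. coord x b * b)"
    unfolding coord_def by (rule someI_ex)
  then show "\<forall>b\<in>set bs. coord x b \<in> center_of K" "x = (\<Sum>b\<in>set bs. coord x b * b)"
    by auto
qed

lemma coord_in_center: "x \<in> K \<Longrightarrow> b \<in> set bs \<Longrightarrow> coord x b \<in> center_of K"
  using coord(1) by blast

lemma independent_coeffs_zero:
  "(\<And>b. b \<in> set bs \<Longrightarrow> c b \<in> center_of K) \<Longrightarrow> (\<Sum>b\<in>set bs. c b * b) = 0 \<Longrightarrow> b \<in> set bs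
    \<Longrightarrow> c b = 0"
  using independent unfolding independent_over_center_def by blast

lemma coord_unique:
  assumes c: "\<forall>b\<in>set bs. c b \<in> center_of K" and x: "x = (\<Sum>b\<in>set bs. c b * b)"
    and b: "b \<in> set bs"
  shows "coord x b = c b"
proof -
  have "x \<in> K"
    unfolding x using c set_bs_subset center_of_subset
    by (intro division_subring_sum[OF division_subring] division_subring_mult[OF division_subring])
      auto
  note cx = coord[OF this]
  have "(\<Sum>b\<in>set bs. (coord x b - c b) * b) = 0"
    using cx(2) x by (simp add: left_diff_distrib sum_subtractf)
  moreover have "\<forall>b\<in>set bs. coord x b - c b \<in> center_of K"
    using cx(1) c by (auto intro: center_of_diff[OF division_subring])
  ultimately have "coord x b - c b = 0"
    using independent_coeffs_zero[of "\<lambda>b. coord x b - c b" b] b by simp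
  then show ?thesis by simp
qed

text \<open>Central scalars pass through left multiplication by a, so the matrix of v \<mapsto> a a' v is the
  product of the matrices of v \<mapsto> a v and v \<mapsto> a' v.\<close>

lemma coord_mult:
  assumes a: "a \<in> K" and a': "a' \<in> K" and u: "u \<in> set bs" and v: "v \<in> set bs"
  shows "coord (a * a' * v) u = (\<Sum>w\<in>set bs. coord (a * w) u * coord (a' * v) w)"
proof (rule coord_unique[OF _ _ u])
  note mult = division_subring_mult[OF division_subring]
  have a'v: "a' * v \<in> K" and aw: "\<And>w. w \<in> set bs \<Longrightarrow> a * w \<in> K"
    using a a' v set_bs_subset by (auto intro: mult)
  show "\<forall>u\<in>set bs. (\<Sum>w\<in>set bs. coord (a * w) u * coord (a' * v) w) \<in> center_of K"
    using coord_in_center aw a'v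
    by (auto intro!: center_of_sum[OF division_subring] center_of_mult[OF division_subring])
  have "a * a' * v = a * (\<Sum>w\<in>set bs. coord (a' * v) w * w)"
    using coord(2)[OF a'v] by (simp add: mult.assoc)
  also have "\<dots> = (\<Sum>w\<in>set bs. coord (a' * v) w * (a * w))"
    using center_of_commute[OF coord_in_center[OF a'v] a]
    by (simp add: sum_distrib_left mult.assoc[symmetric])
  also have "\<dots> = (\<Sum>w\<in>set bs. coord (a' * v) w * (\<Sum>u\<in>set bs. coord (a * w) u * u))"
    using coord(2)[OF aw] by (intro sum.cong) auto
  also have "\<dots> = (\<Sum>w\<in>set bs. \<Sum>u\<in>set bs. (coord (a * w) u * coord (a' * v) w) * u)"
  proof (rule sum.cong[OF refl])
    fix w assume w: "w \<in> set bs"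
    have comm: "coord (a' * v) w * coord (a * w) u = coord (a * w) u * coord (a' * v) w"
      if "u \<in> set bs" for u
      using center_of_commute_center coord_in_center a'v aw w that by blast
    have "coord (a' * v) w * (\<Sum>u\<in>set bs. coord (a * w) u * u) =
        (\<Sum>u\<in>set bs. (coord (a' * v) w * coord (a * w) u) * u)"
      by (simp add: sum_distrib_left mult.assoc)
    also have "\<dots> = (\<Sum>u\<in>set bs. (coord (a * w) u * coord (a' * v) w) * u)"
      by (rule sum.cong[OF refl]) (simp add: comm)
    finally show "coord (a' * v) w * (\<Sum>u\<in>set bs. coord (a * w) u * u) = \<dots>" .
  qed
  also have "\<dots> = (\<Sum>u\<in>set bs. (\<Sum>w\<in>set bs. coord (a * w) u * coord (a' * v) w) * u)"
    by (subst sum.swap) (simp add: sum_distrib_right)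
  finally show "a * a' * v = \<dots>" .
qed

lemma coord_central:
  assumes z: "z \<in> center_of K" and u: "u \<in> set bs" and v: "v \<in> set bs"
  shows "coord (z * v) u = (if u = v then z else 0)"
proof (rule coord_unique[OF _ _ u])
  show "\<forall>u\<in>set bs. (if u = v then z else 0) \<in> center_of K"
    using z center_of_zero[OF division_subring] by auto
  have "(\<Sum>u\<in>set bs. (if u = v then z else 0) * u) = (\<Sum>u\<in>set bs. if u = v then z * u else 0)"
    by (rule sum.cong) auto
  with v show "z * v = (\<Sum>u\<in>set bs. (if u = v then z else 0) * u)"
    by simp
qed

text \<open>Off K the entries form the identity matrix, so that lmat is multiplicative in every
  component and not only in the component at K.\<close>

definition lmat :: "'a \<Rightarrow> 'a centers mat" where
  "lmat a = mat n n (\<lambda>(i, j). lift_at K (coord (a * bs ! j) (bs ! i)) (of_bool (i = j)))"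

lemma lmat_carrier: "lmat a \<in> carrier_mat n n"
  by (simp add: lmat_def)

lemma dim_lmat [simp]: "dim_row (lmat a) = n" "dim_col (lmat a) = n"
  by (simp_all add: lmat_def)

lemma lmat_index:
  "i < n \<Longrightarrow> j < n \<Longrightarrow> lmat a $$ (i, j) = lift_at K (coord (a * bs ! j) (bs ! i)) (of_bool (i = j))"
  by (simp add: lmat_def)

lemma component_lmat:
  assumes "a \<in> K" "i < n" "j < n" "division_subring L"
  shows "component (lmat a $$ (i, j)) L =
    (if L = K then coord (a * bs ! j) (bs ! i) else of_bool (i = j))"
  using assms
  by (simp add: lmat_index component_lift_at[OF division_subring] coord_in_center nth_bs_in
      division_subring_mult[OF division_subring])

lemma sum_of_bool_delta: "k < n \<Longrightarrow> (\<Sum>j = 0..<n. of_bool (i = j) * of_bool (j = k)) = (of_bool (i = k) :: 'b::semiring_1)"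
proof -
  assume k: "k < n"
  have "(\<Sum>j = 0..<n. of_bool (i = j) * of_bool (j = k)) =
      (\<Sum>j = 0..<n. if j = k then of_bool (i = k) else (0 :: 'b))"
    by (rule sum.cong) auto
  with k show ?thesis
    by simp
qed

lemma lmat_mult:
  assumes a: "a \<in> K" and a': "a' \<in> K"
  shows "lmat (a * a') = lmat a * lmat a'"
proof (rule eq_matI)
  fix i k assume "i < dim_row (lmat a * lmat a')" "k < dim_col (lmat a * lmat a')"
  then have i: "i < n" and k: "k < n" by simp_all
  have aa': "a * a' \<in> K" using a a' by (rule division_subring_mult[OF division_subring])
  have "lmat (a * a') $$ (i, k) = (\<Sum>j = 0..<n. lmat a $$ (i, j) * lmat a' $$ (j, k))"
  proof (rule centers_eqI)
    fix L :: "'a set" assume L: "division_subring L"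
    have "component (\<Sum>j = 0..<n. lmat a $$ (i, j) * lmat a' $$ (j, k)) L =
        (\<Sum>j = 0..<n. component (lmat a $$ (i, j)) L * component (lmat a' $$ (j, k)) L)"
      by (simp add: component_sum component_mult)
    also have "\<dots> = (if L = K then \<Sum>j = 0..<n. coord (a * bs ! j) (bs ! i) * coord (a' * bs ! k) (bs ! j)
        else \<Sum>j = 0..<n. of_bool (i = j) * of_bool (j = k))"
      using i k L by (simp add: component_lmat[OF a] component_lmat[OF a'])
    also have "\<dots> = component (lmat (a * a') $$ (i, k)) L"
      using i k L coord_mult[OF a a'] sum_of_bool_delta[OF k]
      by (simp add: component_lmat[OF aa'] sum_set_bs mult.assoc)
    finally show "component (lmat (a * a') $$ (i, k)) L =
        component (\<Sum>j = 0..<n. lmat a $$ (i, j) * lmat a' $$ (j, k)) L" ..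
  qed
  with i k show "lmat (a * a') $$ (i, k) = (lmat a * lmat a') $$ (i, k)"
    by (simp add: scalar_prod_def)
qed simp_all

lemma lmat_central:
  assumes z: "z \<in> center_of K" and i: "i < n" and j: "j < n"
  shows "lmat z $$ (i, j) = (if i = j then lift_at K z 1 else 0)"
  using coord_central[OF z] i j distinct_bs
  by (simp add: lmat_index nth_eq_iff_index_eq lift_at_zero[OF division_subring])

lemma lmat_one: "lmat 1 = 1\<^sub>m n"
  using lmat_central[OF center_of_one[OF division_subring]]
  by (intro eq_matI) (simp_all add: lift_at_one[OF division_subring])

lemma det_lmat_mult: "a \<in> K \<Longrightarrow> b \<in> K \<Longrightarrow> det (lmat (a * b)) = det (lmat a) * det (lmat b)"
  by (simp add: lmat_mult det_mult[OF lmat_carrier lmat_carrier])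

lemma det_lmat_inverse: "x \<in> K \<Longrightarrow> x \<noteq> 0 \<Longrightarrow> det (lmat x) * det (lmat (inverse x)) = 1"
  using det_lmat_mult[of x "inverse x"]
  by (simp add: division_subring_inverse[OF division_subring] lmat_one)

lemma det_lmat_commutator:
  assumes "x \<in> K" "y \<in> K" "x \<noteq> 0" "y \<noteq> 0"
  shows "det (lmat (commutator x y)) = 1"
proof -
  note mult = division_subring_mult[OF division_subring]
    and inv = division_subring_inverse[OF division_subring]
  have "det (lmat (commutator x y)) =
      det (lmat x) * det (lmat y) * det (lmat (inverse x)) * det (lmat (inverse y))"
    unfolding commutator_def using assms by (simp add: det_lmat_mult mult inv)
  also have "\<dots> = (det (lmat x) * det (lmat (inverse x))) * (det (lmat y) * det (lmat (inverse y)))"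
    by (simp add: ac_simps)
  finally show ?thesis
    using assms by (simp add: det_lmat_inverse)
qed

lemma det_lmat_commutator_products: "p \<in> commutator_products K \<Longrightarrow> det (lmat p) = 1"
proof (induction rule: commutator_products.induct)
  case one
  then show ?case by (simp add: lmat_one)
next
  case (commutator_mult x y p)
  have "commutator x y \<in> K" "p \<in> K"
    using commutator_in_commutator_products[OF commutator_mult.hyps(1-4)] commutator_mult.hyps(5)
      commutator_products_subset[OF division_subring] by auto
  with commutator_mult show ?case
    by (simp add: det_lmat_mult det_lmat_commutator)
qed

lemma det_lmat_central: "z \<in> center_of K \<Longrightarrow> det (lmat z) = lift_at K z 1 ^ n"
proof -
  assume z: "z \<in> center_of K"
  have "upper_triangular (lmat z)"
    using lmat_central[OF z] by (auto simp: upper_triangular_def)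
  then have "det (lmat z) = (\<Prod>i = 0..<n. lmat z $$ (i, i))"
    by (simp add: det_upper_triangular[OF _ lmat_carrier] prod_list_diag_prod)
  also have "\<dots> = lift_at K z 1 ^ n"
    using lmat_central[OF z] by simp
  finally show ?thesis .
qed

lemma central_commutator_product_power_length:
  assumes "z \<in> commutator_products K" "z \<in> center_of K"
  shows "z ^ n = 1"
proof -
  have "lift_at K z 1 ^ n = 1"
    using det_lmat_central[OF assms(2)] det_lmat_commutator_products[OF assms(1)] by simp
  then have "component (lift_at K z 1) K ^ n = 1"
    using component_power[OF division_subring] component_one division_subring by metis
  with assms(2) show ?thesis
    by (simp add: component_lift_at[OF division_subring])
qed

end

lemma central_commutator_product_torsion:
  assumes K: "division_subring K" "fin_dim_over_center K"
    and z: "z \<in> commutator_products K" "z \<in> center_of K"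
  shows "\<exists>n > 0. z ^ n = 1"
proof -
  obtain B where B: "spans_over_center K B" "independent_over_center K B"
    using fin_dim_over_center_obtains_basis[OF K] .
  then have "finite B"
    by (simp add: spans_over_center_def)
  then obtain bs where "set bs = B" "distinct bs"
    using finite_distinct_list by blast
  with B interpret center_basis K bs
    using K(1) by unfold_locales auto
  show ?thesis
    using central_commutator_product_power_length[OF z] length_bs_pos by blast
qed

theorem lemma6p2:
  assumes "weakly_locally_finite TYPE('a::division_ring)"
  shows "\<forall>z \<in> center_of (derived_subgroup :: 'a set). \<exists>n::nat. n > 0 \<and> z ^ n = 1"
proof
  fix z :: 'a assume z: "z \<in> center_of derived_subgroup"
  then have "z \<in> commutator_products UNIV"
    using center_of_subset derived_subgroup_subset_commutator_products by blast
  then obtain S where S: "finite S" "z \<in> commutator_products (gen_division_subring S)"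
    by (rule commutator_products_finite_support)
  let ?K = "gen_division_subring S"
  have "z \<in> center_of ?K"
    using S(2) commutator_products_subset[OF division_subring_gen_division_subring]
      center_derived_subgroup_central[OF z] by (auto simp: center_of_def)
  moreover have "fin_dim_over_center ?K"
    using assms S(1) by (simp add: weakly_locally_finite_def)
  ultimately show "\<exists>n::nat. n > 0 \<and> z ^ n = 1"
    using central_commutator_product_torsion[OF division_subring_gen_division_subring] S(2)
    by blast
qed

end
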